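(* Every Pisot number $q \in (1, 1.933]$ satisfies $|q'| \geq \frac{\sqrt5-1}{2}$ for all Galois conjugates $q'$ of $q$.
   Context: A Pisot number is a real algebraic integer $q>1$ all of whose other Galois conjugates have absolute value strictly less than $1$. *)

theory Defs
  imports "HOL-Analysis.Analysis" "HOL-Computational_Algebra.Computational_Algebra"
begin

definition galois_conjugate :: "complex \<Rightarrow> complex \<Rightarrow> bool" where
  "galois_conjugate x z \<longleftrightarrow>
     (\<exists>p :: rat poly. irreducible p \<and> poly (map_poly of_rat p) x = 0 \<and> poly (map_poly of_rat p) z = 0)"

definition pisot :: "real \<Rightarrow> bool" where
  "pisot q \<longleftrightarrow> q > 1 \<and> algebraic_int q \<and>
     (\<forall>z. galois_conjugate (complex_of_real q) z \<and> z \<noteq> complex_of_real q \<longrightarrow> cmod z < 1)"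

end

(* Let q, z, b_1, ..., b_k be the roots of the minimal polynomial P of q, so that
   0 < |b_i| < 1, and suppose r = |z| < (sqrt 5 - 1)/2.  The constant coefficient of P
   is a nonzero integer of modulus q r |b_1 ... b_k| < 2, hence q r |b_1 ... b_k| = 1,
   and the integrality of the coefficients at x and x^(k+1) (Vieta) shows that
   (\<Sum>w. cnj w - 1/w), summed over z, b_1, ..., b_k, equals n - (q - 1/q) for an integer n.
   The Schwarz-Pick inequality |B'(0)| \<le> 1 - |B(0)|^2 for the Blaschke product with
   zeros b_i then turns into |1 - r^2 + z (n - q + 1/q)| \<le> q r^2 - 1/q.  For q \<le> 1.933
   this forces n = 0 and q r = 1, so |B(0)| = 1 and k = 0.  But then P = (x - q)(x - z)
   with z = \<plusminus>1/q, and q \<plusminus> 1/q cannot be an integer for (1 + sqrt 5)/2 < q \<le> 1.933. *)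
theory Submission
  imports Defs "Berlekamp_Zassenhaus.Square_Free_Int_To_Square_Free_GFp"
begin

(* The factorization library loads HOL-Algebra, whose order, coeff and smult would shadow
   the polynomial ones. *)
hide_const (open) Coset.order UnivPoly.coeff module.smult

definition inv_golden_ratio :: real where
  "inv_golden_ratio = (sqrt 5 - 1) / 2"

lemma inv_golden_ratio_sq: "inv_golden_ratio\<^sup>2 = 1 - inv_golden_ratio"
  unfolding inv_golden_ratio_def by (simp add: power_divide power2_diff field_simps)

lemma inv_golden_ratio_bounds: "618/1000 < inv_golden_ratio" "inv_golden_ratio < 1"
proof -
  have "2236/1000 < sqrt 5" by (rule real_less_rsqrt) (simp add: power2_eq_square)
  then show "618/1000 < inv_golden_ratio" unfolding inv_golden_ratio_def by simp
  have "sqrt 5 < 3" by (rule real_less_lsqrt) (simp_all add: power2_eq_square)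
  then show "inv_golden_ratio < 1" unfolding inv_golden_ratio_def by simp
qed

lemma one_plus_inv_golden_ratio_less:
  fixes q r :: real
  assumes "0 < q" "1 \<le> q * r" "r < inv_golden_ratio"
  shows "1 + inv_golden_ratio < q"
proof -
  have "(1 + inv_golden_ratio) * inv_golden_ratio = 1"
    using inv_golden_ratio_sq by (simp add: power2_eq_square algebra_simps)
  also have "1 \<le> q * r" by fact
  also have "q * r < q * inv_golden_ratio" using assms by simp
  finally show ?thesis using inv_golden_ratio_bounds by simp
qed

lemma diff_inverse_bounds:
  fixes q :: real
  assumes q: "1 + inv_golden_ratio < q" "q \<le> 1933/1000"
  shows "1 < q - 1/q" "q - 1/q < 142/100"
proof -
  have q1: "1 < q" using q inv_golden_ratio_bounds by linarith
  have "q * 1 < (q - 1 - inv_golden_ratio) * (q + inv_golden_ratio) + q"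
    using q inv_golden_ratio_bounds by (simp add: mult_pos_pos)
  also have "\<dots> = q * (q - 1/q)"
    using q1 inv_golden_ratio_sq by (simp add: field_simps power2_eq_square)
  finally show "1 < q - 1/q" using q1 by simp
  have "1 / (1933/1000) \<le> 1 / q" using q q1 by (intro divide_left_mono) auto
  then show "q - 1/q < 142/100" using q by simp
qed

lemma not_Ints_strictly_between:
  fixes x :: real and m :: int
  assumes "of_int m < x" "x < of_int m + 1"
  shows "x \<notin> \<int>"
  using assms by (auto elim!: Ints_cases)

lemma plus_inverse_not_Ints:
  fixes q :: real
  assumes "1 < q" "q < 2"
  shows "q + 1/q \<notin> \<int>"
proof (rule not_Ints_strictly_between[of 2])
  have "0 < (q - 1)\<^sup>2" using assms by simp
  also have "(q - 1)\<^sup>2 = q * (q + 1/q) - q * 2"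
    using assms by (simp add: algebra_simps power2_eq_square)
  finally show "of_int 2 < q + 1/q" using assms by simp
  have "1/q < 1" using assms by simp
  then have "q + 1/q < 3" using assms by linarith
  then show "q + 1/q < of_int 2 + 1" by simp
qed

lemma dist_le_diff_inverse:
  fixes q r d :: real
  assumes q: "1 < q" and r: "r < 1" "1 \<le> q * r"
    and ineq: "r * d - (1 - r\<^sup>2) \<le> q * r\<^sup>2 - 1/q"
  shows "d \<le> q - 1/q" and "d = q - 1/q \<Longrightarrow> q * r = 1"
proof -
  define E where "E = (q - 1) * (1 - r) * (q * r - 1)"
  have E: "0 \<le> E" using q r unfolding E_def by simp
  have "q * (r * d - (1 - r\<^sup>2)) \<le> q * (q * r\<^sup>2 - 1/q)" using ineq q by simp
  then have key: "q * r * d \<le> q * r * (q - 1/q) - E"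
    using q unfolding E_def by (simp add: field_simps power2_eq_square)
  have qr: "0 < q * r" using r by linarith
  show "d \<le> q - 1/q" using key E qr by (smt (verit) mult_le_cancel_left_pos)
  assume "d = q - 1/q"
  then have "E = 0" using key E by simp
  then show "q * r = 1" using q r unfolding E_def by simp
qed

lemma dist_one_bound:
  fixes q r :: real
  assumes q: "1 + inv_golden_ratio < q" "q \<le> 1933/1000" and r: "0 \<le> r" "r < inv_golden_ratio"
  shows "q * r * \<bar>1 - (q - 1/q)\<bar> < (1 + q) * (1 - q * r\<^sup>2)"
proof -
  let ?g = inv_golden_ratio
  note g = inv_golden_ratio_bounds inv_golden_ratio_sq
  have q1: "1 < q" using q g by linarith
  have s: "1 < q - 1/q" using diff_inverse_bounds[OF q] by simp
  then have "q * r * \<bar>1 - (q - 1/q)\<bar> = r * (q\<^sup>2 - q - 1)"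
    using q1 by (simp add: field_simps power2_eq_square)
  moreover
  \<comment> \<open>The first two summands are nonnegative for \<open>r \<le> ?g\<close>;
    the last one is the value of the difference at \<open>r = ?g\<close>.\<close>
  have "(1 + q) * (1 - q * r\<^sup>2) - r * (q\<^sup>2 - q - 1)
      = (1 + q) * q * (1 - ?g - r\<^sup>2) + (?g - r) * (q\<^sup>2 - q - 1) + (1 + ?g - q * (q - 2 * ?g))"
    by (simp add: algebra_simps power2_eq_square)
  moreover have "r\<^sup>2 < ?g\<^sup>2" using r by (simp add: power_strict_mono)
  then have "0 \<le> (1 + q) * q * (1 - ?g - r\<^sup>2)" using g q1 by simp
  moreover have "0 \<le> (?g - r) * (q\<^sup>2 - q - 1)"
  proof -
    have "q * 1 < q * (q - 1/q)" using s q1 by (intro mult_strict_left_mono) auto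
    moreover have "q * (q - 1/q) = q\<^sup>2 - 1" using q1 by (simp add: right_diff_distrib power2_eq_square)
    ultimately have "0 < q\<^sup>2 - q - 1" by simp
    then show ?thesis using r by simp
  qed
  moreover have "q * (q - 2 * ?g) < 1 + ?g"
  proof -
    have "q * (q - 2 * ?g) \<le> (1933/1000) * (1933/1000 - 2 * (618/1000))"
      using q g by (intro mult_mono) auto
    then show ?thesis using g by simp
  qed
  ultimately show ?thesis by linarith
qed

lemma dist_two_bound:
  fixes q r :: real
  assumes q: "1 + inv_golden_ratio < q" "q \<le> 1933/1000" and r: "0 \<le> r" "r < inv_golden_ratio"
  shows "q * r * \<bar>2 - (q - 1/q)\<bar> < (1 + q) * (1 - q * r\<^sup>2)"
proof -
  let ?g = inv_golden_ratio
  note g = inv_golden_ratio_bounds inv_golden_ratio_sq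
  have q1: "1 < q" using q g by linarith
  have "q - 1/q < 142/100" using diff_inverse_bounds[OF q] by simp
  then have "q * r * \<bar>2 - (q - 1/q)\<bar> = r * (1 + 2 * q - q\<^sup>2)"
    using q1 by (simp add: field_simps power2_eq_square)
  moreover
  \<comment> \<open>As in \<open>dist_one_bound\<close>; using \<open>?g\<^sup>2 = 1 - ?g\<close>, the value at \<open>r = ?g\<close>
    is now \<open>(2 * ?g - 1) * (q - 1) * (q - 1 - ?g)\<close>.\<close>
  have "(1 + q) * (1 - q * r\<^sup>2) - r * (1 + 2 * q - q\<^sup>2)
      = (1 + q) * q * (1 - ?g - r\<^sup>2) + (?g - r) * (1 + 2 * q - q\<^sup>2)
        + (2 * ?g - 1) * (q - 1) * (q - 1 - ?g) + 2 * (q - 1) * (?g\<^sup>2 - (1 - ?g))"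
    by (simp add: algebra_simps power2_eq_square)
  moreover have "2 * (q - 1) * (?g\<^sup>2 - (1 - ?g)) = 0" using g by simp
  moreover have "r\<^sup>2 < ?g\<^sup>2" using r by (simp add: power_strict_mono)
  then have "0 \<le> (1 + q) * q * (1 - ?g - r\<^sup>2)" using g q1 by simp
  moreover have "0 < (?g - r) * (1 + 2 * q - q\<^sup>2)"
  proof -
    have "0 \<le> q * (2 - q)" using q q1 by simp
    then have "0 < 1 + 2 * q - q\<^sup>2" by (simp add: algebra_simps power2_eq_square)
    then show ?thesis using r by simp
  qed
  moreover have "0 \<le> (2 * ?g - 1) * (q - 1) * (q - 1 - ?g)" using q g by simp
  ultimately show ?thesis by linarith
qed

lemma conj_ineq_excludes_one_two:
  fixes q r :: real and n :: int
  assumes q: "1 + inv_golden_ratio < q" "q \<le> 1933/1000" and r: "0 \<le> r" "r < inv_golden_ratio"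
    and n: "n = 1 \<or> n = 2"
  shows "q * r\<^sup>2 - 1/q < 1 - r\<^sup>2 - r * \<bar>n - (q - 1/q)\<bar>"
proof -
  define d where "d = \<bar>n - (q - 1/q)\<bar>"
  have q1: "1 < q" using q inv_golden_ratio_bounds by linarith
  have "q * r * d < (1 + q) * (1 - q * r\<^sup>2)"
    using n dist_one_bound[OF q r] dist_two_bound[OF q r] unfolding d_def by auto
  moreover have "q * (1 - r\<^sup>2 - r * d) - q * (q * r\<^sup>2 - 1/q) = (1 + q) * (1 - q * r\<^sup>2) - q * r * d"
    using q1 by (simp add: field_simps power2_eq_square)
  ultimately have "q * (q * r\<^sup>2 - 1/q) < q * (1 - r\<^sup>2 - r * d)" by linarith
  then show ?thesis unfolding d_def using q1 by simp
qed

lemma conj_ineq_forces_zero: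
  fixes q r :: real and n :: int
  assumes q: "1 < q" "q \<le> 1933/1000" and r: "0 \<le> r" "r < inv_golden_ratio" "1 \<le> q * r"
    and ineq: "\<bar>1 - r\<^sup>2 - r * \<bar>n - (q - 1/q)\<bar>\<bar> \<le> q * r\<^sup>2 - 1/q"
  shows "n = 0 \<and> q * r = 1"
proof -
  define s where "s = q - 1/q"
  have q_gt: "1 + inv_golden_ratio < q" using one_plus_inv_golden_ratio_less q r by simp
  have s: "1 < s" "s < 142/100" using diff_inverse_bounds[OF q_gt q(2)] unfolding s_def .
  have "r < 1" using r inv_golden_ratio_bounds by linarith
  have "r * \<bar>n - s\<bar> - (1 - r\<^sup>2) \<le> q * r\<^sup>2 - 1/q" using ineq unfolding s_def by linarith
  note dist = dist_le_diff_inverse[OF q(1) \<open>r < 1\<close> r(3) this[unfolded s_def], folded s_def]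
  have "0 \<le> n" "n \<le> 2" using dist(1) s by linarith+
  moreover have "n \<noteq> 1 \<and> n \<noteq> 2"
  proof (rule ccontr)
    assume "\<not> (n \<noteq> 1 \<and> n \<noteq> 2)"
    then have "q * r\<^sup>2 - 1/q < 1 - r\<^sup>2 - r * \<bar>n - s\<bar>"
      using conj_ineq_excludes_one_two[OF q_gt q(2) r(1,2), of n] unfolding s_def by blast
    then show False using ineq abs_ge_self unfolding s_def by (smt (verit))
  qed
  ultimately have "n = 0" by linarith
  then show ?thesis using dist(2) s by simp
qed

lemma no_small_quadratic_conjugate:
  fixes q :: real and z :: complex
  assumes "of_real q + z \<in> \<int>" "q * norm z = 1"
    and "1 + inv_golden_ratio < q" "q \<le> 1933/1000"
  shows False
proof -
  have q1: "1 < q" using assms(3) inv_golden_ratio_bounds by linarith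
  obtain m where "of_real q + z = of_int m" using assms(1) by (elim Ints_cases)
  then have "z = of_real (of_int m - q)" by (simp add: algebra_simps)
  then have "norm z = \<bar>of_int m - q\<bar>" by (simp only: norm_of_real)
  then have "\<bar>of_int m - q\<bar> = 1 / q" using assms(2) q1 by (simp add: field_simps)
  then have "q + 1/q = of_int m \<or> q - 1/q = of_int m" by linarith
  moreover have "q + 1/q \<notin> \<int>" using q1 assms(4) by (intro plus_inverse_not_Ints) auto
  moreover have "q - 1/q \<notin> \<int>"
    using diff_inverse_bounds[OF assms(3,4)] by (intro not_Ints_strictly_between[of 1]) auto
  ultimately show False by auto
qed

(* For the finite Blaschke product B x = (\<Prod>b\<leftarrow>bs. (x - b) / (1 - cnj b * x)) these are
   B 0 and B' 0, and norm_blaschke_coeff1_le below is the Schwarz-Pick inequality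
   norm (B' 0) \<le> 1 - (norm (B 0))\<^sup>2. *)
definition blaschke_coeff0 :: "complex list \<Rightarrow> complex" where
  "blaschke_coeff0 bs = (\<Prod>b\<leftarrow>bs. - b)"

definition blaschke_coeff1 :: "complex list \<Rightarrow> complex" where
  "blaschke_coeff1 bs = blaschke_coeff0 bs * (\<Sum>b\<leftarrow>bs. cnj b - inverse b)"

lemma blaschke_coeff0_simps [simp]:
  "blaschke_coeff0 [] = 1" "blaschke_coeff0 (b # bs) = - b * blaschke_coeff0 bs"
  by (simp_all add: blaschke_coeff0_def)

lemma blaschke_coeff1_Nil [simp]: "blaschke_coeff1 [] = 0"
  by (simp add: blaschke_coeff1_def)

lemma blaschke_coeff1_Cons:
  assumes "b \<noteq> 0"
  shows "blaschke_coeff1 (b # bs)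
    = of_real (1 - (norm b)\<^sup>2) * blaschke_coeff0 bs - b * blaschke_coeff1 bs"
proof -
  have "blaschke_coeff1 (b # bs)
      = (b * inverse b - b * cnj b) * blaschke_coeff0 bs - b * blaschke_coeff1 bs"
    by (simp add: blaschke_coeff1_def algebra_simps)
  also have "b * inverse b - b * cnj b = of_real (1 - (norm b)\<^sup>2)"
    by (simp only: of_real_diff of_real_1 complex_norm_square right_inverse[OF assms])
  finally show ?thesis .
qed

lemma norm_blaschke_coeff0_le_1:
  assumes "\<forall>b\<in>set bs. norm b \<le> 1"
  shows "norm (blaschke_coeff0 bs) \<le> 1"
  using assms by (induction bs) (auto simp: norm_mult intro: mult_le_one)

lemma norm_blaschke_coeff0_less_1:
  assumes "\<forall>b\<in>set bs. norm b < 1" "bs \<noteq> []"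
  shows "norm (blaschke_coeff0 bs) < 1"
proof -
  obtain b bs' where bs: "bs = b # bs'" using assms(2) by (cases bs) auto
  have "norm (blaschke_coeff0 bs') \<le> 1"
    using assms(1) bs by (intro norm_blaschke_coeff0_le_1) (auto intro: less_imp_le)
  then have "norm b * norm (blaschke_coeff0 bs') \<le> norm b" by (simp add: mult_left_le)
  moreover have "norm b < 1" using assms(1) bs by simp
  ultimately show ?thesis using bs by (simp add: norm_mult)
qed

lemma norm_blaschke_coeff1_le:
  assumes "\<forall>b\<in>set bs. b \<noteq> 0 \<and> norm b \<le> 1"
  shows "norm (blaschke_coeff1 bs) \<le> 1 - (norm (blaschke_coeff0 bs))\<^sup>2"
  using assms
proof (induction bs)
  case (Cons b bs)
  define a t where "a = norm b" and "t = norm (blaschke_coeff0 bs)"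
  have a: "0 \<le> a" "a \<le> 1" "b \<noteq> 0" using Cons.prems unfolding a_def by auto
  have t: "0 \<le> t" "t \<le> 1"
    using Cons.prems norm_blaschke_coeff0_le_1[of bs] unfolding t_def by auto
  have "a\<^sup>2 \<le> 1" using a by (simp add: power_le_one)
  then have "norm (of_real (1 - a\<^sup>2) * blaschke_coeff0 bs) = (1 - a\<^sup>2) * t"
    unfolding norm_mult norm_of_real t_def by simp
  moreover have "norm (blaschke_coeff1 (b # bs))
      \<le> norm (of_real (1 - a\<^sup>2) * blaschke_coeff0 bs) + norm (b * blaschke_coeff1 bs)"
    unfolding blaschke_coeff1_Cons[OF a(3)] a_def by (rule norm_triangle_ineq4)
  ultimately have "norm (blaschke_coeff1 (b # bs)) \<le> (1 - a\<^sup>2) * t + a * norm (blaschke_coeff1 bs)"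
    by (simp add: norm_mult a_def)
  also have "\<dots> \<le> (1 - a\<^sup>2) * t + a * (1 - t\<^sup>2)"
    using Cons a unfolding t_def by (intro add_left_mono mult_left_mono) auto
  also have "\<dots> = 1 - (a * t)\<^sup>2 - (1 - a) * (1 - a * t) * (1 - t)"
    by (simp add: algebra_simps power2_eq_square)
  also have "\<dots> \<le> 1 - (a * t)\<^sup>2"
    using a t by (simp add: mult_le_one)
  finally show ?case by (simp add: a_def t_def norm_mult)
qed simp

definition root_poly :: "'a :: comm_ring_1 list \<Rightarrow> 'a poly" where
  "root_poly as = (\<Prod>a\<leftarrow>as. [:- a, 1:])"

lemma root_poly_Nil [simp]: "root_poly [] = 1"
  by (simp add: root_poly_def)

lemma root_poly_Cons: "root_poly (a # as) = [:- a, 1:] * root_poly as"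
  by (simp add: root_poly_def)

lemma poly_root_poly_eq_0_iff:
  "poly (root_poly as) x = 0 \<longleftrightarrow> x \<in> set (as :: 'a :: idom list)"
  by (induction as) (auto simp: root_poly_Cons)

lemma coeff_0_root_poly: "coeff (root_poly as) 0 = (\<Prod>a\<leftarrow>as. - a)"
  by (induction as) (simp_all add: root_poly_Cons mult_pCons_left)

lemma degree_root_poly [simp]: "degree (root_poly as) = length (as :: 'a :: idom list)"
  unfolding root_poly_def by (rule degree_linear_factors)

lemma lead_coeff_root_poly: "lead_coeff (root_poly as) = (1 :: 'a :: idom)"
  unfolding root_poly_def by (intro monic_prod_list) auto

lemma coeff_Suc_root_poly_Cons:
  "coeff (root_poly (a # as)) (Suc n) = - a * coeff (root_poly as) (Suc n) + coeff (root_poly as) n"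
  by (simp add: root_poly_Cons mult_pCons_left)

lemma coeff_root_poly_sum:
  "coeff (root_poly (a # as)) (length as) = - sum_list (a # as :: 'a :: idom list)"
proof (induction as arbitrary: a)
  case (Cons b as)
  have "coeff (root_poly (a # b # as)) (length (b # as))
      = - a * coeff (root_poly (b # as)) (length (b # as)) + coeff (root_poly (b # as)) (length as)"
    by (simp only: length_Cons coeff_Suc_root_poly_Cons)
  then show ?case using Cons.IH lead_coeff_root_poly[of "b # as"] by simp
qed (simp add: root_poly_Cons mult_pCons_left)

lemma coeff_1_root_poly:
  assumes "0 \<notin> set as"
  shows "coeff (root_poly as) 1 = - coeff (root_poly as) 0 * (\<Sum>a\<leftarrow>as. inverse (a :: 'a :: field))"
  using assms
  by (induction as)
    (simp_all add: coeff_Suc_root_poly_Cons[where n = 0] coeff_0_root_poly field_simps)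

lemma root_poly_of_proots:
  fixes p :: "complex poly"
  assumes "lead_coeff p = 1" "mset as = proots p"
  shows "p = root_poly as"
proof -
  have "p = smult (lead_coeff p) (\<Prod>x\<in>#proots p. [:- x, 1:])"
    by (rule complex_poly_decompose_multiset[symmetric])
  also have "\<dots> = root_poly as"
    using assms unfolding root_poly_def by (metis mset_map prod_mset_prod_list smult_1_left)
  finally show ?thesis .
qed

lemma root_poly_of_simple_root:
  fixes p :: "complex poly"
  assumes p: "lead_coeff p = 1" and roots: "poly p a = 0" "poly p b = 0" "a \<noteq> b"
    and simple: "order a p = 1"
  obtains bs where "p = root_poly (a # b # bs)" "a \<notin> set bs"
proof -
  have p0: "p \<noteq> 0" using p by (cases "p = 0") simp_all
  have a: "count (proots p) a = 1" using simple p0 by simp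
  have b: "b \<in># proots p - {#a#}" using roots p0 by (simp add: in_diff_count order_root)
  obtain bs where bs: "mset bs = proots p - {#a#} - {#b#}" using ex_mset by blast
  have "add_mset a (proots p - {#a#}) = proots p" using roots(1) p0 by (intro insert_DiffM) simp
  moreover have "add_mset b (proots p - {#a#} - {#b#}) = proots p - {#a#}" using b by (rule insert_DiffM)
  ultimately have "mset (a # b # bs) = proots p" using bs by simp
  then have "p = root_poly (a # b # bs)" by (rule root_poly_of_proots[OF p])
  moreover have "count (mset bs) a = 0" using bs a roots(3) by simp
  then have "a \<notin> set bs" by (simp add: count_eq_zero_iff)
  ultimately show ?thesis by (rule that)
qed

interpretation of_rat_complex: field_hom_0' "of_rat :: rat \<Rightarrow> complex"
  by unfold_locales (simp_all add: of_rat_add of_rat_mult)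

interpretation of_rat_complex_poly: map_poly_comm_semiring_hom "of_rat :: rat \<Rightarrow> complex" ..

lemma irreducible_dvd_of_common_root:
  fixes p f :: "rat poly" and w :: complex
  assumes irr: "irreducible p"
    and roots: "poly (map_poly of_rat p) w = 0" "poly (map_poly of_rat f) w = 0"
  shows "p dvd f"
proof (rule ccontr)
  assume "\<not> p dvd f"
  then have "coprime p f"
    using irr by (intro prime_elem_imp_coprime irreducible_imp_prime_elem)
  then have "coprime (map_poly of_rat p) (map_poly (of_rat :: rat \<Rightarrow> complex) f)"
    by (simp add: coprime_iff_gcd_eq_1 of_rat_complex.map_poly_gcd [symmetric])
  then show False using coprime_poly_0 roots by blast
qed

lemma order_of_irreducible_le_1:
  assumes "irreducible (p :: rat poly)"
  shows "order w (map_poly (of_rat :: rat \<Rightarrow> complex) p) \<le> 1"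
proof -
  have "square_free p" using assms by (intro irreducible\<^sub>d_square_free) simp
  then have "rsquarefree (map_poly (of_rat :: rat \<Rightarrow> complex) p)"
    by (intro square_free_rsquarefree) (simp add: of_rat_complex.square_free_map_poly)
  then show ?thesis unfolding rsquarefree_def by (metis le_refl zero_le_one)
qed

lemma irreducible_roots_nonzero:
  fixes p :: "rat poly" and x w :: complex
  assumes irr: "irreducible p" and x: "poly (map_poly of_rat p) x = 0" "x \<noteq> 0"
    and w: "poly (map_poly of_rat p) w = 0"
  shows "w \<noteq> 0"
proof
  assume "w = 0"
  then have "p dvd [:0, 1:]" using w by (intro irreducible_dvd_of_common_root[OF irr]) auto
  then obtain k where "[:0, 1:] = p * k" by (elim dvdE)
  then have "map_poly of_rat [:0, 1:] = map_poly of_rat p * map_poly (of_rat :: rat \<Rightarrow> complex) k"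
    by (simp add: of_rat_complex_poly.hom_mult)
  then have "poly (map_poly of_rat [:0, 1:]) x = 0" using x(1) by simp
  then show False using x(2) by simp
qed

lemma irreducible_algebraic_int_root_monic:
  fixes p :: "rat poly" and x :: complex
  assumes irr: "irreducible p" and root: "poly (map_poly of_rat p) x = 0" and "algebraic_int x"
  obtains c :: rat and F :: "int poly"
  where "c \<noteq> 0" "lead_coeff F = 1" "p = smult c (map_poly of_int F)"
proof -
  obtain f :: "int poly" where f: "poly (map_poly of_int f) x = 0" "lead_coeff f = 1"
    using \<open>algebraic_int x\<close> unfolding algebraic_int_altdef_ipoly by blast
  have "p dvd map_poly of_int f"
    by (rule irreducible_dvd_of_common_root[OF irr root]) (simp add: map_poly_map_poly o_def f)
  then obtain k where fk: "map_poly rat_of_int f = p * k" by (elim dvdE)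
  obtain r G where G: "rat_to_normalized_int_poly p = (r, G)" by force
  obtain s H where H: "rat_to_normalized_int_poly k = (s, H)" by force
  have "content f dvd 1" using content_dvd_coeff[of f "degree f"] f(2) by simp
  then have "f = G * H"
    using f(2) by (intro rat_to_int_factor_content_1[OF _ fk G H]) (auto simp: is_unit_content_iff)
  then have "lead_coeff G * lead_coeff H = 1" using f(2) by (simp add: lead_coeff_mult)
  then have unit: "lead_coeff G * lead_coeff G = 1" by (auto simp: zmult_eq_1_iff)
  define e where "e = lead_coeff G"
  have p: "p = smult r (map_poly of_int G)" "0 < r" using rat_to_normalized_int_poly[OF G] by auto
  have "r * of_int e \<noteq> 0" using p(2) unit unfolding e_def by auto
  moreover have "lead_coeff (smult e G) = 1" using unit unfolding e_def by (cases "G = 0") auto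
  moreover have "smult (r * of_int e) (map_poly of_int (smult e G))
      = smult (r * of_int (e * e)) (map_poly of_int G)"
    by (simp add: of_int_hom.map_poly_hom_smult mult.assoc)
  then have "p = smult (r * of_int e) (map_poly of_int (smult e G))"
    using p(1) unit unfolding e_def by simp
  ultimately show ?thesis by (rule that)
qed

lemma pisot_min_poly:
  fixes q :: real and z :: complex
  assumes pisot: "pisot q" and conj: "galois_conjugate (of_real q) z"
  obtains P :: "complex poly"
  where "lead_coeff P = 1" "\<forall>i. coeff P i \<in> \<int>" "poly P (of_real q) = 0" "poly P z = 0"
    "order (of_real q) P = 1" "\<forall>w. poly P w = 0 \<and> w \<noteq> of_real q \<longrightarrow> w \<noteq> 0 \<and> norm w < 1"
proof -
  let ?Q = "complex_of_real q"
  let ?map = "map_poly (of_rat :: rat \<Rightarrow> complex)"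
  obtain p where irr: "irreducible p" and pQ: "poly (?map p) ?Q = 0" and pz: "poly (?map p) z = 0"
    using conj unfolding galois_conjugate_def by blast
  have q: "1 < q" "algebraic_int ?Q" using pisot unfolding pisot_def by auto
  obtain c F where c: "c \<noteq> 0" "lead_coeff F = 1" "p = smult c (map_poly of_int F)"
    using irreducible_algebraic_int_root_monic[OF irr pQ q(2)] .
  define P :: "complex poly" where "P = map_poly of_int F"
  have mapP: "?map p = smult (of_rat c) P"
    unfolding c(3) P_def by (simp add: of_rat_hom.map_poly_hom_smult map_poly_map_poly o_def)
  have roots: "poly P w = 0 \<longleftrightarrow> poly (?map p) w = 0" for w using mapP c(1) by simp
  have lead: "lead_coeff P = 1" unfolding P_def by (simp add: c(2))
  moreover have "\<forall>i. coeff P i \<in> \<int>" unfolding P_def by (simp add: coeff_map_poly)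
  moreover have "poly P ?Q = 0" "poly P z = 0" using pQ pz roots by simp_all
  moreover have "order ?Q P = 1"
  proof -
    have "P \<noteq> 0" using lead by (cases "P = 0") simp_all
    then have "order ?Q P \<noteq> 0" using pQ roots by (simp add: order_root)
    moreover have "order ?Q P = order ?Q (?map p)" using c(1) by (simp add: mapP order_smult)
    ultimately show ?thesis using order_of_irreducible_le_1[OF irr, of ?Q] by simp
  qed
  moreover have "w \<noteq> 0 \<and> norm w < 1" if w: "poly P w = 0" "w \<noteq> ?Q" for w
  proof
    have "galois_conjugate ?Q w"
      unfolding galois_conjugate_def using irr pQ w(1) roots by blast
    then show "norm w < 1" using pisot w(2) unfolding pisot_def by blast
    show "w \<noteq> 0" using irreducible_roots_nonzero[OF irr pQ] w(1) roots q(1) by simp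
  qed
  then have "\<forall>w. poly P w = 0 \<and> w \<noteq> ?Q \<longrightarrow> w \<noteq> 0 \<and> norm w < 1" by blast
  ultimately show ?thesis by (rule that)
qed

lemma pisot_conjugate_root_list:
  fixes q :: real and z :: complex
  assumes "pisot q" "galois_conjugate (of_real q) z" "z \<noteq> of_real q"
  obtains xs where "\<forall>i. coeff (root_poly (of_real q # z # xs)) i \<in> \<int>"
    "\<forall>b\<in>set (z # xs). b \<noteq> 0 \<and> norm b < 1"
proof -
  obtain P where P: "lead_coeff P = 1" "\<forall>i. coeff P i \<in> \<int>" "poly P (of_real q) = 0"
    "poly P z = 0" "order (of_real q) P = 1"
    "\<forall>w. poly P w = 0 \<and> w \<noteq> of_real q \<longrightarrow> w \<noteq> 0 \<and> norm w < 1"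
    using pisot_min_poly[OF assms(1,2)] by blast
  obtain xs where xs: "P = root_poly (of_real q # z # xs)" "of_real q \<notin> set xs"
    by (rule root_poly_of_simple_root[OF P(1,3,4) assms(3)[symmetric] P(5)])
  have "b \<noteq> 0 \<and> norm b < 1" if b: "b \<in> set (z # xs)" for b
  proof -
    have "poly P b = 0" using b unfolding xs(1) by (simp add: poly_root_poly_eq_0_iff)
    moreover have "b \<noteq> of_real q" using b xs(2) assms(3) by auto
    ultimately show ?thesis using P(6) by blast
  qed
  then have "\<forall>b\<in>set (z # xs). b \<noteq> 0 \<and> norm b < 1" by blast
  moreover have "\<forall>i. coeff (root_poly (of_real q # z # xs)) i \<in> \<int>" using P(2) xs(1) by simp
  ultimately show thesis by (intro that)
qed

lemma Ints_norm_less_2: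
  fixes x :: complex
  assumes "x \<in> \<int>" "x \<noteq> 0" "norm x < 2"
  shows "x = 1 \<or> x = -1"
proof -
  obtain k where k: "x = of_int k" using assms(1) by (elim Ints_cases)
  then have "k \<noteq> 0" "\<bar>k\<bar> < 2" using assms(2,3) by auto
  then have "k = 1 \<or> k = -1" by linarith
  then show ?thesis using k by auto
qed

lemma root_poly_coeff_0_unit:
  fixes q :: real and z :: complex
  assumes int: "\<forall>i. coeff (root_poly (of_real q # z # xs)) i \<in> \<int>"
    and disc: "\<forall>b\<in>set (z # xs). b \<noteq> 0 \<and> norm b < 1" and q: "0 < q" "q < 2"
  shows "coeff (root_poly (of_real q # z # xs)) 0 \<in> {1, -1}"
    and "q * norm z * norm (blaschke_coeff0 xs) = 1"
proof -
  let ?c = "coeff (root_poly (of_real q # z # xs)) 0"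
  have c: "?c = of_real q * z * blaschke_coeff0 xs"
    by (simp add: coeff_0_root_poly blaschke_coeff0_def)
  have "norm (blaschke_coeff0 xs) \<le> 1"
    using disc by (intro norm_blaschke_coeff0_le_1) (auto intro: less_imp_le)
  then have "norm z * norm (blaschke_coeff0 xs) \<le> norm z" by (simp add: mult_left_le)
  moreover have "norm z < 1" using disc by simp
  ultimately have "norm z * norm (blaschke_coeff0 xs) \<le> 1" by linarith
  then have "q * (norm z * norm (blaschke_coeff0 xs)) \<le> q" using q by (simp add: mult_left_le)
  moreover have "norm ?c = q * (norm z * norm (blaschke_coeff0 xs))"
    using c q by (simp add: norm_mult)
  ultimately have "norm ?c < 2" using q by linarith
  moreover have "?c \<noteq> 0" using c disc q by (auto simp: blaschke_coeff0_def prod_list_zero_iff)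
  ultimately have "?c = 1 \<or> ?c = -1" using int Ints_norm_less_2 by blast
  then show "?c \<in> {1, -1}" by simp
  have "norm ?c = 1" using \<open>?c = 1 \<or> ?c = -1\<close> by auto
  then show "q * norm z * norm (blaschke_coeff0 xs) = 1" using c q by (simp add: norm_mult)
qed

lemma conj_inverse_sum_integer_shift:
  fixes q :: real and z :: complex
  assumes int: "\<forall>i. coeff (root_poly (of_real q # z # xs)) i \<in> \<int>"
    and nonzero: "0 \<notin> set (z # xs)" "q \<noteq> 0"
    and unit: "coeff (root_poly (of_real q # z # xs)) 0 \<in> {1, -1}"
  obtains n :: int where "(\<Sum>b\<leftarrow>z # xs. cnj b - inverse b) = of_int n - of_real (q - 1/q)"
proof -
  let ?Q = "complex_of_real q" and ?P = "root_poly (complex_of_real q # z # xs)"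
  have "- sum_list (?Q # z # xs) \<in> \<int>"
    unfolding coeff_root_poly_sum[symmetric] using int by blast
  then have "sum_list (?Q # z # xs) \<in> \<int>" by (simp only: minus_in_Ints_iff)
  then obtain m where "sum_list (?Q # z # xs) = of_int m" by (elim Ints_cases)
  then have m: "sum_list (z # xs) = of_int m - ?Q" by (simp add: eq_diff_eq add.commute)
  have "- coeff ?P 0 * coeff ?P 1 = (coeff ?P 0 * coeff ?P 0) * (\<Sum>a\<leftarrow>?Q # z # xs. inverse a)"
    using coeff_1_root_poly[of "?Q # z # xs"] nonzero by simp
  moreover have "coeff ?P 0 * coeff ?P 0 = 1" using unit by auto
  ultimately have "(\<Sum>a\<leftarrow>?Q # z # xs. inverse a) = - coeff ?P 0 * coeff ?P 1" by simp
  also have "\<dots> \<in> \<int>" using int by (intro Ints_mult Ints_minus) auto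
  finally obtain j where "(\<Sum>a\<leftarrow>?Q # z # xs. inverse a) = of_int j"
    by (elim Ints_cases)
  then have j: "(\<Sum>a\<leftarrow>z # xs. inverse a) = of_int j - inverse ?Q"
    by (simp add: eq_diff_eq add.commute)
  have "(\<Sum>b\<leftarrow>z # xs. cnj b - inverse b) = cnj (sum_list (z # xs)) - (\<Sum>a\<leftarrow>z # xs. inverse a)"
    by (induction xs) (simp_all add: algebra_simps)
  also have "\<dots> = of_int (m - j) - of_real (q - 1/q)"
    unfolding m j by (simp add: of_real_inverse divide_inverse)
  finally show thesis by (rule that)
qed

lemma schwarz_pick_conj_ineq:
  fixes q :: real and z :: complex and n :: int
  assumes disc: "\<forall>b\<in>set (z # xs). b \<noteq> 0 \<and> norm b < 1" and q: "0 < q"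
    and unit: "q * norm z * norm (blaschke_coeff0 xs) = 1"
    and shift: "(\<Sum>b\<leftarrow>z # xs. cnj b - inverse b) = of_int n - of_real (q - 1/q)"
  shows "\<bar>1 - (norm z)\<^sup>2 - norm z * \<bar>n - (q - 1/q)\<bar>\<bar> \<le> q * (norm z)\<^sup>2 - 1/q"
proof -
  define r t s where "r = norm z" and "t = norm (blaschke_coeff0 xs)" and "s = q - 1/q"
  define X where "X = of_real (1 - r\<^sup>2) + z * (of_int n - of_real s)"
  have z: "z \<noteq> 0" "r < 1" using disc unfolding r_def by auto
  have "blaschke_coeff1 (z # xs) = - z * blaschke_coeff0 xs * (of_int n - of_real s)"
    using shift unfolding blaschke_coeff1_def s_def by simp
  then have "z * blaschke_coeff1 xs = blaschke_coeff0 xs * X"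
    using blaschke_coeff1_Cons[OF z(1), of xs] unfolding X_def r_def by (simp add: algebra_simps)
  then have "t * norm X = r * norm (blaschke_coeff1 xs)"
    unfolding r_def t_def by (simp flip: norm_mult)
  also have "\<dots> \<le> r * (1 - t\<^sup>2)"
    using disc norm_blaschke_coeff1_le[of xs] unfolding r_def t_def
    by (intro mult_left_mono) (auto intro: less_imp_le)
  finally have "t * norm X \<le> r * (1 - t\<^sup>2)" .
  then have "q * r * (t * norm X) \<le> q * r * (r * (1 - t\<^sup>2))"
    using q unfolding r_def by (intro mult_left_mono) auto
  moreover have qrt: "q * r * t = 1" using unit unfolding r_def t_def .
  then have "q * r * (t * norm X) = norm X" by (simp add: mult.assoc [symmetric])
  moreover have "q * r * (r * (1 - t\<^sup>2)) = q * r\<^sup>2 - (q * r * t) * (r * t)"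
    by (simp add: algebra_simps power2_eq_square)
  moreover have "r * t = 1 / q" using qrt q by (simp add: field_simps)
  ultimately have "norm X \<le> q * r\<^sup>2 - 1/q" using qrt by simp
  moreover have "X = of_real (1 - r\<^sup>2) - (- z * of_real (of_int n - s))"
    unfolding X_def by simp
  then have "\<bar>norm (of_real (1 - r\<^sup>2) :: complex) - norm (- z * of_real (of_int n - s))\<bar> \<le> norm X"
    by (simp only: norm_triangle_ineq3)
  moreover have "r\<^sup>2 < 1" using z r_def by (simp add: abs_square_less_1)
  then have "norm (of_real (1 - r\<^sup>2) :: complex) = 1 - r\<^sup>2" unfolding norm_of_real by simp
  moreover have "norm (- z * of_real (of_int n - s)) = r * \<bar>n - s\<bar>"
    unfolding r_def norm_mult norm_minus_cancel norm_of_real ..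
  ultimately show ?thesis unfolding r_def s_def by linarith
qed

lemma root_list_conjugate_norm_ge:
  fixes q :: real and z :: complex
  assumes int: "\<forall>i. coeff (root_poly (of_real q # z # xs)) i \<in> \<int>"
    and disc: "\<forall>b\<in>set (z # xs). b \<noteq> 0 \<and> norm b < 1" and q: "1 < q" "q \<le> 1933/1000"
  shows "inv_golden_ratio \<le> norm z"
proof (rule ccontr)
  assume "\<not> inv_golden_ratio \<le> norm z"
  then have r: "norm z < inv_golden_ratio" by simp
  have "0 < q" "q < 2" using q by auto
  note unit = root_poly_coeff_0_unit[OF int disc this]
  have "0 \<notin> set (z # xs)" "q \<noteq> 0" using disc q by auto
  then obtain n where "(\<Sum>b\<leftarrow>z # xs. cnj b - inverse b) = of_int n - of_real (q - 1/q)"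
    using conj_inverse_sum_integer_shift[OF int _ _ unit(1)] by blast
  then have ineq: "\<bar>1 - (norm z)\<^sup>2 - norm z * \<bar>n - (q - 1/q)\<bar>\<bar> \<le> q * (norm z)\<^sup>2 - 1/q"
    using schwarz_pick_conj_ineq[OF disc _ unit(2)] q by simp
  have "norm (blaschke_coeff0 xs) \<le> 1"
    using disc by (intro norm_blaschke_coeff0_le_1) (auto intro: less_imp_le)
  then have "q * norm z * norm (blaschke_coeff0 xs) \<le> q * norm z"
    using q by (simp add: mult_left_le)
  then have "1 \<le> q * norm z" using unit(2) by simp
  then have qr: "q * norm z = 1" using conj_ineq_forces_zero[OF q _ r _ ineq] by simp
  then have "norm (blaschke_coeff0 xs) = 1" using unit(2) by simp
  then have "xs = []" using norm_blaschke_coeff0_less_1[of xs] disc by auto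
  then have "coeff (root_poly [of_real q, z]) 1 \<in> \<int>" using int by simp
  then have "of_real q + z \<in> \<int>"
    using coeff_root_poly_sum[of "of_real q" "[z]"] minus_in_Ints_iff[of "of_real q + z"] by simp
  moreover have "1 + inv_golden_ratio < q"
    using one_plus_inv_golden_ratio_less[of q "norm z"] qr q r by simp
  ultimately show False using no_small_quadratic_conjugate qr q(2) by blast
qed

theorem theorem5p1:
  fixes q :: real and z :: complex
  assumes "pisot q" and "q \<le> 1933 / 1000"
    and "galois_conjugate (complex_of_real q) z"
  shows "cmod z \<ge> (sqrt 5 - 1) / 2"
proof -
  have q: "1 < q" using assms(1) unfolding pisot_def by simp
  have "inv_golden_ratio \<le> cmod z"
  proof (cases "z = complex_of_real q")
    case True
    then show ?thesis using q inv_golden_ratio_bounds by simp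
  next
    case False
    then obtain xs where "\<forall>i. coeff (root_poly (of_real q # z # xs)) i \<in> \<int>"
      "\<forall>b\<in>set (z # xs). b \<noteq> 0 \<and> norm b < 1"
      using pisot_conjugate_root_list[OF assms(1,3)] by blast
    then show ?thesis by (rule root_list_conjugate_norm_ge[OF _ _ q assms(2)])
  qed
  then show ?thesis unfolding inv_golden_ratio_def .
qed

end
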